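(* Let $x,k,r$ be positive integers and let $p$ be a prime. Then \[ x^3 + (x+1)^3 + \cdots + (x+k-1)^3 = (p^r)^2 \] holds if and only if $(x,k,p,r) = (p^{2c},1,p,3c)$ for some positive integer $c$, or $(x,k,p,r) = (1,2,3,1)$. *)

theory Defs
  imports "HOL-Computational_Algebra.Primes"
begin

end

theory Submission
  imports Defs
begin

text \<open>Writing \<open>x = y + 1\<close> and \<open>A = x + \<dots> + (x + k - 1)\<close>, Nicomachus' identity gives
  \<open>x\<^sup>3 + \<dots> + (x + k - 1)\<^sup>3 = A (A + y (y + 1))\<close>. If this is a prime power, so are both
  factors, hence the smaller factor \<open>A\<close> divides \<open>y (y + 1)\<close>; as \<open>y\<close> and \<open>y + 1\<close> are coprime
  and both smaller than \<open>A\<close> when \<open>k \<ge> 2\<close>, this forces \<open>y = 0\<close>. Then the sum is \<open>A\<^sup>2\<close> with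
  \<open>A = k (k + 1) / 2 = p\<^sup>r\<close>, and again by coprimality \<open>p\<^sup>r\<close> divides \<open>k + 1\<close>, leaving only
  \<open>k = 2\<close>, \<open>p\<^sup>r = 3\<close>.\<close>

lemma prime_power_dvd_mult_coprime:
  fixes p a b :: "'a :: factorial_semiring"
  assumes "prime p" "coprime a b" "p ^ n dvd a * b"
  shows "p ^ n dvd a \<or> p ^ n dvd b"
proof (cases "n = 0")
  case False
  then have "n > 0" by simp
  show ?thesis
  proof (cases "p dvd a")
    case True
    then have "\<not> p dvd b"
      using assms(1,2) coprime_common_divisor not_prime_unit by metis
    then have "p ^ n dvd a"
      using prime_power_dvd_multD[of p n b a] assms(1,3) \<open>n > 0\<close> by (simp add: mult.commute)
    then show ?thesis ..
  next
    case False
    then have "p ^ n dvd b"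
      using prime_power_dvd_multD[of p n a b] assms(1,3) \<open>n > 0\<close> by simp
    then show ?thesis ..
  qed
qed simp

lemma prime_power_dvd_mult_Suc:
  fixes p y :: nat
  assumes "prime p" "p ^ n dvd y * Suc y"
  shows "p ^ n dvd y \<or> p ^ n dvd Suc y"
  using prime_power_dvd_mult_coprime[OF assms(1) _ assms(2)] by simp

lemma smaller_factor_of_prime_power_dvd:
  fixes p a b :: nat
  assumes "prime p" "a * b = p ^ n" "a \<le> b"
  shows "a dvd b"
proof -
  obtain i j where ij: "a = p ^ i" "b = p ^ j"
    using prime_power_mult_nat[OF assms(1,2)] by blast
  have "i \<le> j"
    using assms(3) ij prime_gt_1_nat[OF assms(1)] power_le_imp_le_exp by blast
  then show ?thesis
    using ij le_imp_power_dvd by blast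
qed

lemma twice_sum_consecutive:
  "2 * (\<Sum>i<k. Suc y + i) + y * Suc y = (y + k) * Suc (y + k)"
  by (induction k) (auto simp: algebra_simps)

lemma sum_consecutive_cubes:
  "(\<Sum>i<k. (Suc y + i) ^ 3) = (\<Sum>i<k. Suc y + i) * ((\<Sum>i<k. Suc y + i) + y * Suc y)"
proof (induction k)
  case (Suc k)
  define A where "A = (\<Sum>i<k. Suc y + i)"
  have twice_A: "2 * A + y * Suc y = (y + k) * Suc (y + k)"
    using twice_sum_consecutive A_def by simp
  have "(\<Sum>i<Suc k. (Suc y + i) ^ 3) = A * (A + y * Suc y) + (Suc y + k) ^ 3"
    using Suc A_def by simp
  also have "(Suc y + k) ^ 3 = (Suc y + k) * (2 * A + y * Suc y) + (Suc y + k) * (Suc y + k)"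
    by (subst twice_A) (simp add: algebra_simps power3_eq_cube)
  also have "A * (A + y * Suc y) + \<dots> = (A + (Suc y + k)) * (A + (Suc y + k) + y * Suc y)"
    by (simp add: algebra_simps)
  finally show ?case
    by (simp add: A_def)
qed simp

lemma sum_consecutive_ge:
  fixes x k :: nat
  assumes "2 \<le> k"
  shows "2 * x + 1 \<le> (\<Sum>i<k. x + i)"
proof -
  have "(\<Sum>i<2. x + i) \<le> (\<Sum>i<k. x + i)"
    using assms by (intro sum_mono2) auto
  then show ?thesis
    by (simp add: numeral_2_eq_2)
qed

lemma cube_eq_prime_power_square:
  fixes x p r :: nat
  assumes "prime p"
  shows "x ^ 3 = (p ^ r) ^ 2 \<longleftrightarrow> (\<exists>c. x = p ^ (2 * c) \<and> r = 3 * c)"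
proof
  assume cube: "x ^ 3 = (p ^ r) ^ 2"
  then obtain j where j: "x = p ^ j"
    using prime_power_exp_nat[OF assms, of 3 x "r * 2"] by (auto simp: power_mult)
  then have "p ^ (3 * j) = p ^ (2 * r)"
    using cube by (simp add: power_mult[symmetric] mult.commute)
  then have "3 * j = 2 * r"
    using prime_power_inj[OF assms] by blast
  then obtain c where "j = 2 * c"
    by (metis dvd_def even_mult_iff odd_numeral)
  then show "\<exists>c. x = p ^ (2 * c) \<and> r = 3 * c"
    using j \<open>3 * j = 2 * r\<close> by auto
qed (auto simp: power_mult[symmetric] mult.commute)

lemma sum_consecutive_cubes_prime_power_starts_at_one:
  fixes p y k m :: nat
  assumes "prime p" "2 \<le> k" "(\<Sum>i<k. (Suc y + i) ^ 3) = p ^ m"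
  shows "y = 0"
proof -
  define A where "A = (\<Sum>i<k. Suc y + i)"
  have A_gt: "Suc y < A"
    using sum_consecutive_ge[OF assms(2), of "Suc y"] A_def by simp
  have "A dvd A + y * Suc y"
    using assms(1) by (rule smaller_factor_of_prime_power_dvd)
      (use assms(3) sum_consecutive_cubes A_def in auto)
  then have "A dvd y * Suc y"
    by (simp add: dvd_add_right_iff)
  moreover obtain i where "A = p ^ i"
    using prime_power_mult_nat[OF assms(1)] assms(3) sum_consecutive_cubes A_def by metis
  ultimately have "A dvd y \<or> A dvd Suc y"
    using prime_power_dvd_mult_Suc[OF assms(1)] by simp
  then show ?thesis
    using A_gt nat_dvd_not_less[of y A] nat_dvd_not_less[of "Suc y" A] by auto
qed

lemma triangular_eq_twice_prime_power:
  fixes p k r :: nat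
  assumes "prime p" "2 \<le> k" "k * Suc k = 2 * p ^ r"
  shows "k = 2 \<and> p = 3 \<and> r = 1"
proof -
  have "p ^ r dvd k \<or> p ^ r dvd Suc k"
    using prime_power_dvd_mult_Suc[OF assms(1)] assms(3) by (metis dvd_triv_right)
  moreover have "\<not> p ^ r dvd k"
  proof
    assume "p ^ r dvd k"
    then have "2 * p ^ r \<le> 2 * k"
      using assms(2) dvd_imp_le by simp
    also have "\<dots> < Suc k * k"
      using assms(2) by (intro mult_less_mono1) auto
    finally show False
      using assms(3) by (simp add: mult.commute)
  qed
  ultimately obtain m where m: "Suc k = p ^ r * m"
    by (auto elim: dvdE)
  then have "p ^ r * (k * m) = p ^ r * 2"
    using assms(3) by (metis mult.assoc mult.commute)
  then have "k * m = 2"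
    using prime_gt_0_nat[OF assms(1)] by simp
  then have "k dvd 2"
    by (metis dvd_triv_left)
  then have "k = 2"
    using assms(2) dvd_imp_le[of k 2] by linarith
  then have "m = 1"
    using \<open>k * m = 2\<close> by simp
  then have "p ^ r = 3 ^ 1"
    using m \<open>k = 2\<close> by simp
  moreover have "prime (3::nat)"
    by simp
  ultimately show ?thesis
    using \<open>k = 2\<close> prime_power_inj''[OF assms(1), of 3 r 1] by simp
qed

lemma sum_consecutive_cubes_eq_prime_power_square:
  fixes p y k r :: nat
  assumes "prime p" "2 \<le> k" "(\<Sum>i<k. (Suc y + i) ^ 3) = (p ^ r) ^ 2"
  shows "y = 0 \<and> k = 2 \<and> p = 3 \<and> r = 1"
proof -
  have "y = 0"
    using sum_consecutive_cubes_prime_power_starts_at_one[OF assms(1,2)] assms(3)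
    by (metis power_mult)
  define A where "A = (\<Sum>i<k. Suc y + i)"
  have "A * (A + y * Suc y) = (p ^ r) ^ 2"
    using assms(3) sum_consecutive_cubes[where y = y and k = k] unfolding A_def by argo
  then have "A ^ 2 = (p ^ r) ^ 2"
    using \<open>y = 0\<close> by (simp add: power2_eq_square)
  moreover have "2 * A = k * Suc k"
    using twice_sum_consecutive[where y = y and k = k] \<open>y = 0\<close> unfolding A_def by simp
  ultimately have "k * Suc k = 2 * p ^ r"
    using power2_eq_imp_eq by fastforce
  then show ?thesis
    using triangular_eq_twice_prime_power[OF assms(1,2)] \<open>y = 0\<close> by simp
qed

theorem theorem1:
  fixes x k r p :: nat
  assumes "x > 0" and "k > 0" and "r > 0" and "prime p"
  shows "(\<Sum>i<k. (x + i) ^ 3) = (p ^ r) ^ 2 \<longleftrightarrow>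
         ((\<exists>c::nat. c > 0 \<and> x = p ^ (2 * c) \<and> k = 1 \<and> r = 3 * c)
          \<or> (x = 1 \<and> k = 2 \<and> p = 3 \<and> r = 1))"
proof (cases "k = 1")
  case True
  then show ?thesis
    using cube_eq_prime_power_square[OF assms(4), of x r] assms(3) by auto
next
  case False
  with assms(2) have k: "2 \<le> k" by simp
  obtain y where y: "x = Suc y"
    using assms(1) gr0_implies_Suc by blast
  have "(\<Sum>i<2. (1 + i) ^ 3) = ((3::nat) ^ 1) ^ 2"
    by (simp add: eval_nat_numeral)
  then show ?thesis
    using sum_consecutive_cubes_eq_prime_power_square[OF assms(4) k, of y r] y False by auto
qed

end
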